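(* Let $F$ be a field and let $v$ be a place of $F(T)$ which is trivial on $F$ and whose residue field is separable over $F$. Then the maps $\mathcal D_j$ on $F(T)$ extend continuously to the completion of $F(T)$ at $v$, and there they form a higher $K$-derivation for any coefficient field $K$ of the completion such that $K$ contains $F$.
   Context: For $j\ge0$, $\mathcal D_j$ is the $j$th hyperdifferential operator: the $F$-linear map on $F[T]$ with $\mathcal D_j(T^m)=\binom{m}{j}T^{m-j}$ for $m\ge0$. The sequence $(\mathcal D_j)$ is a higher $F$-derivation on $F[T]$ and extends uniquely to a higher $F$-derivation on the field $F(T)$; these extended maps are the $\mathcal D_j$ on $F(T)$. Here, for a commutative ring $R$ and $R$-algebra $A$, a higher $R$-derivation on $A$ is a sequence of $R$-linear maps $d_j:A\to A$ with $d_0=\mathrm{id}$ and $d_j(ab)=\sum_{k=0}^jd_k(a)d_{j-k}(b)$. A coefficient field of a complete discretely valued field is a subfield of its valuation ring mapping isomorphically onto the residue field. *)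

theory Defs
  imports "HOL-Computational_Algebra.Polynomial" "HOL-Computational_Algebra.Fraction_Field"
          "HOL-Computational_Algebra.Polynomial_Factorial"
begin

text \<open>The rational function field F(T) is modelled as the type 'a poly fract.\<close>

definition rf_of_poly :: "'a::field poly \<Rightarrow> 'a poly fract" where
  "rf_of_poly p = Fract p 1"

definition rf_const :: "'a::field \<Rightarrow> 'a poly fract" where
  "rf_const c = rf_of_poly [:c:]"

definition hasse_poly :: "nat \<Rightarrow> 'a::field poly \<Rightarrow> 'a poly" where
  "hasse_poly j p = (\<Sum>m\<le>degree p. monom (of_nat (m choose j) * coeff p m) (m - j))"

text \<open>Higher R-derivation on a field B, where the base ring R is given by its image in B
  (a set of elements of B); R-linearity means additivity and homogeneity w.r.t. R.\<close>

definition higher_derivation :: "'b::field set \<Rightarrow> (nat \<Rightarrow> 'b \<Rightarrow> 'b) \<Rightarrow> bool" where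
  "higher_derivation R d \<longleftrightarrow>
     d 0 = id \<and>
     (\<forall>j x y. d j (x + y) = d j x + d j y) \<and>
     (\<forall>j r x. r \<in> R \<longrightarrow> d j (r * x) = r * d j x) \<and>
     (\<forall>j a b. d j (a * b) = (\<Sum>k\<le>j. d k a * d (j - k) b))"

definition hasse_rf :: "nat \<Rightarrow> 'a::field poly fract \<Rightarrow> 'a poly fract" where
  "hasse_rf = (THE d. higher_derivation (range rf_const) d \<and>
                      (\<forall>j p. d j (rf_of_poly p) = rf_of_poly (hasse_poly j p)))"

text \<open>Normalized discrete valuations (the value at 0 is irrelevant; 0 has value infinity).\<close>

definition discrete_valuation :: "('b::field \<Rightarrow> int) \<Rightarrow> bool" where
  "discrete_valuation v \<longleftrightarrow>
     (\<forall>x y. x \<noteq> 0 \<longrightarrow> y \<noteq> 0 \<longrightarrow> v (x * y) = v x + v y) \<and>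
     (\<forall>x y. x \<noteq> 0 \<longrightarrow> y \<noteq> 0 \<longrightarrow> x + y \<noteq> 0 \<longrightarrow> min (v x) (v y) \<le> v (x + y)) \<and>
     (\<exists>x. x \<noteq> 0 \<and> v x = 1)"

definition in_valring :: "('b::field \<Rightarrow> int) \<Rightarrow> 'b \<Rightarrow> bool" where
  "in_valring v x \<longleftrightarrow> x = 0 \<or> 0 \<le> v x"

definition in_maxideal :: "('b::field \<Rightarrow> int) \<Rightarrow> 'b \<Rightarrow> bool" where
  "in_maxideal v x \<longleftrightarrow> x = 0 \<or> 0 < v x"

definition vclose :: "('b::field \<Rightarrow> int) \<Rightarrow> int \<Rightarrow> 'b \<Rightarrow> 'b \<Rightarrow> bool" where
  "vclose v N x y \<longleftrightarrow> x = y \<or> N \<le> v (x - y)"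

definition vcauchy :: "('b::field \<Rightarrow> int) \<Rightarrow> (nat \<Rightarrow> 'b) \<Rightarrow> bool" where
  "vcauchy v s \<longleftrightarrow> (\<forall>N. \<exists>M. \<forall>m n. M \<le> m \<longrightarrow> M \<le> n \<longrightarrow> vclose v N (s m) (s n))"

definition vconverges :: "('b::field \<Rightarrow> int) \<Rightarrow> (nat \<Rightarrow> 'b) \<Rightarrow> 'b \<Rightarrow> bool" where
  "vconverges v s l \<longleftrightarrow> (\<forall>N. \<exists>M. \<forall>n. M \<le> n \<longrightarrow> vclose v N (s n) l)"

definition vcomplete :: "('b::field \<Rightarrow> int) \<Rightarrow> bool" where
  "vcomplete v \<longleftrightarrow> (\<forall>s. vcauchy v s \<longrightarrow> (\<exists>l. vconverges v s l))"

definition vcontinuous :: "('b::field \<Rightarrow> int) \<Rightarrow> ('b \<Rightarrow> 'b) \<Rightarrow> bool" where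
  "vcontinuous v f \<longleftrightarrow>
     (\<forall>x N. \<exists>M. \<forall>y. vclose v M y x \<longrightarrow> vclose v N (f y) (f x))"

definition field_hom :: "('a::field \<Rightarrow> 'b::field) \<Rightarrow> bool" where
  "field_hom \<iota> \<longleftrightarrow> \<iota> 1 = 1 \<and> (\<forall>x y. \<iota> (x + y) = \<iota> x + \<iota> y) \<and> (\<forall>x y. \<iota> (x * y) = \<iota> x * \<iota> y)"

definition is_completion ::
    "('a::field \<Rightarrow> int) \<Rightarrow> ('b::field \<Rightarrow> int) \<Rightarrow> ('a \<Rightarrow> 'b) \<Rightarrow> bool" where
  "is_completion v w \<iota> \<longleftrightarrow>
     discrete_valuation w \<and> vcomplete w \<and> field_hom \<iota> \<and>
     (\<forall>x. x \<noteq> 0 \<longrightarrow> w (\<iota> x) = v x) \<and>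
     (\<forall>y N. \<exists>x. vclose w N y (\<iota> x))"

definition subfield :: "'b::field set \<Rightarrow> bool" where
  "subfield K \<longleftrightarrow> 0 \<in> K \<and> 1 \<in> K \<and>
     (\<forall>x\<in>K. \<forall>y\<in>K. x + y \<in> K \<and> x * y \<in> K) \<and>
     (\<forall>x\<in>K. - x \<in> K) \<and> (\<forall>x\<in>K. x \<noteq> 0 \<longrightarrow> inverse x \<in> K)"

text \<open>Coefficient field: a subfield of the valuation ring mapping isomorphically
  (bijectively, the map being a ring map) onto the residue field O/m.\<close>

definition coefficient_field :: "('b::field \<Rightarrow> int) \<Rightarrow> 'b set \<Rightarrow> bool" where
  "coefficient_field w K \<longleftrightarrow>
     subfield K \<and> (\<forall>x\<in>K. in_valring w x) \<and>
     (\<forall>a\<in>K. \<forall>b\<in>K. in_maxideal w (a - b) \<longrightarrow> a = b) \<and>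
     (\<forall>x. in_valring w x \<longrightarrow> (\<exists>a\<in>K. in_maxideal w (x - a)))"

definition separable_poly :: "'a::field poly \<Rightarrow> bool" where
  "separable_poly f \<longleftrightarrow> coprime f (pderiv f)"

text \<open>Residue field of v separable over F: every residue class is a root of a
  separable polynomial over F (which is nonzero, being coprime to its derivative).\<close>

definition residue_separable :: "('a::field poly fract \<Rightarrow> int) \<Rightarrow> bool" where
  "residue_separable v \<longleftrightarrow>
     (\<forall>x. in_valring v x \<longrightarrow>
        (\<exists>f. separable_poly f \<and> in_maxideal v (poly (map_poly rf_const f) x)))"

definition place_trivial_on_F :: "('a::field poly fract \<Rightarrow> int) \<Rightarrow> bool" where
  "place_trivial_on_F v \<longleftrightarrow> discrete_valuation v \<and> (\<forall>c. c \<noteq> 0 \<longrightarrow> v (rf_const c) = 0)"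

end

theory Submission
  imports Defs "HOL-Computational_Algebra.Formal_Power_Series"
begin

text \<open>The operators D_j on F(T) are the coefficients of the Taylor homomorphism
  F(T) \<rightarrow> F(T)[[X]], the unique ring homomorphism sending a polynomial p to p(T + X), i.e. to the
  series of its hyperderivatives. The key estimate is v(D_j x) \<ge> v(x) - j C for some C \<ge> 0:
  at the place at infinity D_j does not raise the degree (C = 0); at a finite place it follows by
  writing p = P^k u with P a polynomial of least degree of positive value; and the Leibniz rule
  carries it from polynomials to fractions. So each D_j is Lipschitz and extends by continuity to
  the completion, where additivity and the Leibniz rule persist by density. Finally, each c in a
  coefficient field K containing F is a simple root of a separable polynomial f over F (lift the
  residue of c); inductively, D_k applied to f(c) = 0 gives f'(c) D_k(c) = 0, so D_k vanishes on K
  for k > 0, which makes the extended family K-linear.\<close>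

unbundle fps_syntax

section \<open>Hyperderivatives of polynomials\<close>

lemma coeff_hasse_poly:
  "coeff (hasse_poly j p) i = of_nat ((i + j) choose j) * coeff p (i + j)"
proof -
  have "coeff (hasse_poly j p) i =
     (\<Sum>m\<le>degree p. if m = i + j then of_nat (m choose j) * coeff p m else 0)"
    unfolding hasse_poly_def coeff_sum coeff_monom
    by (rule sum.cong) (auto simp: binomial_eq_0)
  also have "\<dots> = of_nat ((i + j) choose j) * coeff p (i + j)"
    by (auto simp: sum.delta coeff_eq_0)
  finally show ?thesis .
qed

lemma hasse_poly_add: "hasse_poly j (p + q) = hasse_poly j p + hasse_poly j q"
  by (simp add: poly_eq_iff coeff_hasse_poly algebra_simps)

lemma hasse_poly_sum: "hasse_poly j (sum f A) = (\<Sum>x\<in>A. hasse_poly j (f x))"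
  by (simp add: poly_eq_iff coeff_hasse_poly coeff_sum sum_distrib_left)

lemma hasse_poly_0_left [simp]: "hasse_poly 0 p = p"
  by (simp add: poly_eq_iff coeff_hasse_poly)

lemma hasse_poly_0_right [simp]: "hasse_poly j 0 = 0"
  by (simp add: poly_eq_iff coeff_hasse_poly)

lemma hasse_poly_const: "j > 0 \<Longrightarrow> hasse_poly j [:c:] = 0"
  by (simp add: poly_eq_iff coeff_hasse_poly coeff_pCons split: nat.splits)

lemma hasse_poly_1: "hasse_poly j 1 = (if j = 0 then 1 else 0)"
  using hasse_poly_const[of j 1] by (auto simp: one_pCons)

lemma hasse_poly_monom: "hasse_poly j (monom a m) = monom (of_nat (m choose j) * a) (m - j)"
  by (auto simp: poly_eq_iff coeff_hasse_poly coeff_monom binomial_eq_0)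

lemma degree_hasse_poly_le: "degree (hasse_poly j p) \<le> degree p"
  by (rule degree_le) (simp add: coeff_hasse_poly coeff_eq_0)

text \<open>On monomials the Leibniz rule is Vandermonde's identity.\<close>

lemma hasse_poly_mult_monom:
  "hasse_poly j (monom a m * monom b n) =
     (\<Sum>k\<le>j. hasse_poly k (monom a m) * hasse_poly (j - k) (monom b n))"
proof -
  have "hasse_poly k (monom a m) * hasse_poly (j - k) (monom b n) =
        monom (of_nat ((m choose k) * (n choose (j - k))) * (a * b)) (m + n - j)" if "k \<le> j" for k
  proof (cases "k \<le> m \<and> j - k \<le> n")
    case True
    then have "m - k + (n - (j - k)) = m + n - j" using that by auto
    then show ?thesis by (simp add: hasse_poly_monom mult_monom algebra_simps)
  next
    case False
    then have "(m choose k) * (n choose (j - k)) = 0" by (auto simp: binomial_eq_0)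
    then show ?thesis using False by (auto simp: hasse_poly_monom mult_monom binomial_eq_0)
  qed
  then have "(\<Sum>k\<le>j. hasse_poly k (monom a m) * hasse_poly (j - k) (monom b n)) =
        monom (of_nat ((m + n) choose j) * (a * b)) (m + n - j)"
    by (simp add: monom_sum[symmetric] sum_distrib_right[symmetric] of_nat_sum[symmetric]
        vandermonde del: of_nat_mult)
  then show ?thesis by (simp add: mult_monom hasse_poly_monom)
qed

lemma hasse_poly_mult:
  "hasse_poly j (p * q) = (\<Sum>k\<le>j. hasse_poly k p * hasse_poly (j - k) q)"
proof -
  define P where "P i = monom (coeff p i) i" for i
  define Q where "Q i = monom (coeff q i) i" for i
  define m n where "m = degree p" and "n = degree q"
  have p: "p = (\<Sum>i\<le>m. P i)" and q: "q = (\<Sum>l\<le>n. Q l)"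
    by (simp_all add: P_def Q_def m_def n_def poly_as_sum_of_monoms)
  have "(\<Sum>k\<le>j. hasse_poly k p * hasse_poly (j - k) q) =
        (\<Sum>k\<le>j. \<Sum>i\<le>m. \<Sum>l\<le>n. hasse_poly k (P i) * hasse_poly (j - k) (Q l))"
    unfolding p q by (simp only: hasse_poly_sum sum_product)
  also have "\<dots> = (\<Sum>i\<le>m. \<Sum>l\<le>n. \<Sum>k\<le>j. hasse_poly k (P i) * hasse_poly (j - k) (Q l))"
    by (subst sum.swap) (rule sum.cong[OF refl], rule sum.swap)
  also have "\<dots> = (\<Sum>i\<le>m. \<Sum>l\<le>n. hasse_poly j (P i * Q l))"
    by (simp add: P_def Q_def hasse_poly_mult_monom)
  also have "\<dots> = hasse_poly j (p * q)"
    unfolding p q by (simp only: hasse_poly_sum sum_product)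
  finally show ?thesis by simp
qed

section \<open>The Taylor homomorphism on F(T)\<close>

lemma rf_of_poly_add: "rf_of_poly (p + q) = rf_of_poly p + rf_of_poly q"
  by (simp add: rf_of_poly_def)

lemma rf_of_poly_mult: "rf_of_poly (p * q) = rf_of_poly p * rf_of_poly q"
  by (simp add: rf_of_poly_def)

lemma rf_of_poly_0 [simp]: "rf_of_poly 0 = 0"
  by (simp add: rf_of_poly_def fract_collapse)

lemma rf_of_poly_1 [simp]: "rf_of_poly 1 = 1"
  by (simp add: rf_of_poly_def fract_collapse)

lemma rf_of_poly_eq_0_iff [simp]: "rf_of_poly p = 0 \<longleftrightarrow> p = 0"
  by (simp add: rf_of_poly_def Zero_fract_def eq_fract)

lemma rf_of_poly_sum: "rf_of_poly (sum f A) = (\<Sum>x\<in>A. rf_of_poly (f x))"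
  by (induction A rule: infinite_finite_induct) (auto simp: rf_of_poly_add)

lemma rf_of_poly_power: "rf_of_poly (p ^ n) = rf_of_poly p ^ n"
  by (induction n) (auto simp: rf_of_poly_mult)

lemma rf_of_poly_mult_Fract: "q \<noteq> 0 \<Longrightarrow> rf_of_poly q * Fract p q = rf_of_poly p"
  by (simp add: rf_of_poly_def eq_fract)

lemma rf_of_poly_pCons:
  "rf_of_poly (pCons a p) = rf_const a + rf_of_poly [:0, 1:] * rf_of_poly p"
proof -
  have "pCons a p = [:a:] + [:0, 1:] * p" by simp
  then show ?thesis by (simp only: rf_const_def rf_of_poly_add rf_of_poly_mult)
qed

lemma rf_const_add: "rf_const (a + b) = rf_const a + rf_const b"
  by (simp add: rf_const_def rf_of_poly_add[symmetric])

lemma rf_const_mult: "rf_const (a * b) = rf_const a * rf_const b"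
  by (simp add: rf_const_def rf_of_poly_mult[symmetric] mult.commute)

lemma rf_const_0 [simp]: "rf_const 0 = 0"
  by (simp add: rf_const_def)

lemma rf_const_1 [simp]: "rf_const 1 = 1"
  by (simp add: rf_const_def one_pCons[symmetric])

definition taylor_poly :: "'a::field poly \<Rightarrow> 'a poly fract fps" where
  "taylor_poly p = Abs_fps (\<lambda>j. rf_of_poly (hasse_poly j p))"

lemma taylor_poly_nth [simp]: "taylor_poly p $ j = rf_of_poly (hasse_poly j p)"
  by (simp add: taylor_poly_def)

lemma taylor_poly_mult: "taylor_poly (p * q) = taylor_poly p * taylor_poly q"
  by (rule fps_ext)
    (simp add: fps_mult_nth hasse_poly_mult rf_of_poly_sum rf_of_poly_mult atLeast0AtMost)

lemma taylor_poly_add: "taylor_poly (p + q) = taylor_poly p + taylor_poly q"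
  by (rule fps_ext) (simp add: hasse_poly_add rf_of_poly_add)

lemma taylor_poly_1 [simp]: "taylor_poly 1 = 1"
  by (rule fps_ext) (simp add: hasse_poly_1)

lemma taylor_poly_const: "taylor_poly [:c:] = fps_const (rf_const c)"
  by (rule fps_ext) (simp add: hasse_poly_const rf_const_def)

lemma taylor_poly_eq_0_iff [simp]: "taylor_poly q = 0 \<longleftrightarrow> q = 0"
proof
  assume "taylor_poly q = 0"
  then have "taylor_poly q $ 0 = 0" by simp
  then show "q = 0" by simp
qed (simp add: fps_eq_iff)

text \<open>Since the constant term of a Taylor series is the polynomial itself, the ring homomorphism
  taylor_poly extends to the fraction field: its value at p/q is the unique solution of
  taylor_poly q * X = taylor_poly p.\<close>

definition taylor :: "'a::field poly fract \<Rightarrow> 'a poly fract fps" where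
  "taylor x = (SOME X. \<exists>p q. q \<noteq> 0 \<and> x = Fract p q \<and> taylor_poly q * X = taylor_poly p)"

lemma taylor_Fract:
  assumes q: "q \<noteq> 0"
  shows "taylor_poly q * taylor (Fract p q) = taylor_poly p"
proof -
  define X where "X = taylor (Fract p q)"
  have "taylor_poly q * inverse (taylor_poly q) = 1"
    by (rule inverse_mult_eq_1') (simp add: q)
  then have "taylor_poly q * (taylor_poly p * inverse (taylor_poly q)) = taylor_poly p"
    by (simp add: mult.left_commute[of "taylor_poly q"])
  then have "\<exists>X p' q'. q' \<noteq> 0 \<and> Fract p q = Fract p' q' \<and> taylor_poly q' * X = taylor_poly p'"
    using q by blast
  then have "\<exists>p' q'. q' \<noteq> 0 \<and> Fract p q = Fract p' q' \<and> taylor_poly q' * X = taylor_poly p'"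
    unfolding X_def taylor_def by (rule someI_ex)
  then obtain p' q' where q': "q' \<noteq> 0" "Fract p q = Fract p' q'"
    and X: "taylor_poly q' * X = taylor_poly p'"
    by blast
  have "taylor_poly q' * (taylor_poly q * X) = taylor_poly q * taylor_poly p'"
    by (simp add: X mult.left_commute[of "taylor_poly q'"])
  also have "\<dots> = taylor_poly (p * q')"
    using q q' by (simp add: eq_fract taylor_poly_mult[symmetric] mult.commute)
  also have "\<dots> = taylor_poly q' * taylor_poly p"
    by (simp add: taylor_poly_mult mult.commute)
  finally show ?thesis using q'(1) by (simp add: X_def)
qed

lemma taylor_eqI:
  assumes "q \<noteq> 0" "taylor_poly q * X = taylor_poly p"
  shows "taylor (Fract p q) = X"
proof -
  have "taylor_poly q * taylor (Fract p q) = taylor_poly q * X"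
    using taylor_Fract[of q p] assms by simp
  then show ?thesis using assms(1) by simp
qed

lemma taylor_rf_of_poly: "taylor (rf_of_poly p) = taylor_poly p"
  unfolding rf_of_poly_def by (rule taylor_eqI) simp_all

lemma taylor_mult: "taylor (x * y) = taylor x * taylor y"
proof -
  obtain p q where x: "x = Fract p q" "q \<noteq> 0" by (cases x)
  obtain r s where y: "y = Fract r s" "s \<noteq> 0" by (cases y)
  have "taylor_poly (q * s) * (taylor x * taylor y) = taylor_poly (p * r)"
    using x y by (simp add: taylor_Fract taylor_poly_mult algebra_simps)
  then show ?thesis using x y by (simp add: taylor_eqI)
qed

lemma taylor_add: "taylor (x + y) = taylor x + taylor y"
proof -
  obtain p q where x: "x = Fract p q" "q \<noteq> 0" by (cases x)
  obtain r s where y: "y = Fract r s" "s \<noteq> 0" by (cases y)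
  have "taylor_poly (q * s) * (taylor x + taylor y) =
        taylor_poly s * (taylor_poly q * taylor x) + taylor_poly q * (taylor_poly s * taylor y)"
    by (simp add: taylor_poly_mult algebra_simps)
  also have "\<dots> = taylor_poly (p * s + r * q)"
    using x y by (simp add: taylor_Fract taylor_poly_mult taylor_poly_add algebra_simps)
  finally show ?thesis using x y by (simp add: taylor_eqI)
qed

lemma taylor_nth_0 [simp]: "taylor x $ 0 = x"
proof -
  obtain p q where x: "x = Fract p q" "q \<noteq> 0" by (cases x)
  have "(taylor_poly q * taylor x) $ 0 = taylor_poly p $ 0" using x taylor_Fract by metis
  then have "rf_of_poly q * (taylor x $ 0) = rf_of_poly q * x"
    using x by (simp add: rf_of_poly_mult_Fract)
  then show ?thesis using x by simp
qed

lemma higher_derivation_taylor: "higher_derivation (range rf_const) (\<lambda>j x. taylor x $ j)"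
  unfolding higher_derivation_def
proof (intro conjI allI impI)
  fix j r x assume "r \<in> range rf_const"
  then have "taylor r = fps_const r"
    by (auto simp: rf_const_def taylor_rf_of_poly taylor_poly_const)
  then show "taylor (r * x) $ j = r * taylor x $ j" by (simp add: taylor_mult)
qed (auto simp: taylor_add taylor_mult fps_mult_nth atLeast0AtMost)

text \<open>The generating series x \<mapsto> sum of d j x X^j of a higher derivation d is multiplicative
  and agrees with taylor on polynomials, hence everywhere.\<close>

lemma higher_derivation_eq_taylor:
  assumes d: "higher_derivation R d" "\<And>j p. d j (rf_of_poly p) = rf_of_poly (hasse_poly j p)"
  shows "d j x = taylor x $ j"
proof -
  define G where "G x = Abs_fps (\<lambda>j. d j x)" for x
  obtain p q where x: "x = Fract p q" "q \<noteq> 0" by (cases x)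
  have "G (y * z) = G y * G z" for y z
    using d(1) by (intro fps_ext) (simp add: G_def fps_mult_nth higher_derivation_def atLeast0AtMost)
  moreover have "G (rf_of_poly p) = taylor_poly p" for p
    using d(2) by (intro fps_ext) (simp add: G_def)
  ultimately have "taylor_poly q * G x = taylor_poly p"
    using x rf_of_poly_mult_Fract by metis
  then have "taylor x = G x" using x taylor_eqI by simp
  then show ?thesis by (simp add: G_def)
qed

lemma hasse_rf_eq_taylor: "hasse_rf = (\<lambda>j x. taylor x $ j)"
  unfolding hasse_rf_def
  by (rule the_equality)
    (auto simp: higher_derivation_taylor taylor_rf_of_poly higher_derivation_eq_taylor intro!: ext)

lemma higher_derivation_hasse_rf: "higher_derivation (range rf_const) hasse_rf"
  by (simp add: hasse_rf_eq_taylor higher_derivation_taylor)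

lemma hasse_rf_rf_of_poly: "hasse_rf j (rf_of_poly p) = rf_of_poly (hasse_poly j p)"
  by (simp add: hasse_rf_eq_taylor taylor_rf_of_poly)

lemma hasse_rf_rf_const: "0 < k \<Longrightarrow> hasse_rf k (rf_const a) = 0"
  by (simp add: rf_const_def hasse_rf_rf_of_poly hasse_poly_const)

section \<open>Discrete valuations\<close>

text \<open>v(x) \<ge> n, reading v(0) as infinity (the value v 0 itself is junk).\<close>

definition vge :: "('b::field \<Rightarrow> int) \<Rightarrow> int \<Rightarrow> 'b \<Rightarrow> bool" where
  "vge v n x \<longleftrightarrow> x = 0 \<or> n \<le> v x"

lemma vge_0 [simp]: "vge v n 0"
  by (simp add: vge_def)

lemma vge_self: "vge v (v x) x"
  by (simp add: vge_def)

lemma vge_mono: "vge v n x \<Longrightarrow> m \<le> n \<Longrightarrow> vge v m x"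
  by (auto simp: vge_def)

lemma vclose_iff_vge: "vclose v N x y \<longleftrightarrow> vge v N (x - y)"
  by (simp add: vclose_def vge_def)

lemma in_valring_iff_vge: "in_valring v x \<longleftrightarrow> vge v 0 x"
  by (simp add: in_valring_def vge_def)

lemma in_maxideal_iff_vge: "in_maxideal v x \<longleftrightarrow> vge v 1 x"
  by (auto simp: in_maxideal_def vge_def)

context
  fixes v :: "'b::field \<Rightarrow> int"
  assumes v: "discrete_valuation v"
begin

lemma valuation_mult: "x \<noteq> 0 \<Longrightarrow> y \<noteq> 0 \<Longrightarrow> v (x * y) = v x + v y"
  using v by (simp add: discrete_valuation_def)

lemma valuation_add: "x \<noteq> 0 \<Longrightarrow> y \<noteq> 0 \<Longrightarrow> x + y \<noteq> 0 \<Longrightarrow> min (v x) (v y) \<le> v (x + y)"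
  using v by (simp add: discrete_valuation_def)

lemma valuation_1 [simp]: "v 1 = 0"
  using valuation_mult[of 1 1] by simp

lemma valuation_uminus [simp]: "v (- x) = v x"
proof (cases "x = 0")
  case False
  have "v (-1) = 0" using valuation_mult[of "-1" "-1"] by simp
  then show ?thesis using False valuation_mult[of "-1" x] by simp
qed simp

lemma valuation_power: "x \<noteq> 0 \<Longrightarrow> v (x ^ k) = int k * v x"
  by (induction k) (simp_all add: valuation_mult algebra_simps)

lemma vge_add: "vge v n x \<Longrightarrow> vge v n y \<Longrightarrow> vge v n (x + y)"
  using valuation_add[of x y] by (cases "x = 0"; cases "y = 0"; cases "x + y = 0") (auto simp: vge_def)

lemma vge_uminus [simp]: "vge v n (- x) \<longleftrightarrow> vge v n x"
  by (simp add: vge_def)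

lemma vge_diff: "vge v n x \<Longrightarrow> vge v n y \<Longrightarrow> vge v n (x - y)"
  using vge_add[of n x "-y"] by simp

lemma vge_mult: "vge v n x \<Longrightarrow> vge v m y \<Longrightarrow> vge v (n + m) (x * y)"
  using valuation_mult[of x y] by (cases "x = 0"; cases "y = 0") (auto simp: vge_def)

lemma vge_sum: "(\<And>i. i \<in> A \<Longrightarrow> vge v n (f i)) \<Longrightarrow> vge v n (sum f A)"
  by (induction A rule: infinite_finite_induct) (auto intro: vge_add)

lemma vge_cancel_left:
  assumes "q \<noteq> 0" "vge v n (q * z)"
  shows "vge v (n - v q) z"
  using assms valuation_mult[of q z] by (cases "z = 0") (auto simp: vge_def)

lemma valuation_add_dominated:
  assumes "x \<noteq> 0" "vge v (v x + 1) y"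
  shows "v (x + y) = v x"
proof (cases "y = 0")
  case False
  then have y: "v x < v y" using assms by (simp add: vge_def)
  have "x + y \<noteq> 0"
    using y by (metis add_eq_0_iff less_irrefl valuation_uminus)
  moreover have "min (v (x + y)) (v y) \<le> v x"
    using valuation_add[of "x + y" "- y"] False assms(1) calculation by simp
  ultimately show ?thesis
    using y valuation_add[OF assms(1) False] by linarith
qed simp

lemma vge_all_imp_zero: "(\<And>N. vge v N x) \<Longrightarrow> x = 0"
  by (metis vge_def add1_zle_eq order_less_irrefl)

end

section \<open>Field homomorphisms and polynomials\<close>

context
  fixes h :: "'a::field \<Rightarrow> 'b::field"
  assumes h: "field_hom h"
begin

lemma field_hom_add: "h (x + y) = h x + h y"
  using h by (simp add: field_hom_def)

lemma field_hom_mult: "h (x * y) = h x * h y"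
  using h by (simp add: field_hom_def)

lemma field_hom_1: "h 1 = 1"
  using h by (simp add: field_hom_def)

lemma field_hom_0: "h 0 = 0"
  using field_hom_add[of 0 0] by (metis add.right_neutral add_left_cancel)

lemma field_hom_diff: "h (x - y) = h x - h y"
  using field_hom_add[of "x - y" y] by (simp add: eq_diff_eq)

lemma field_hom_sum: "h (sum f A) = (\<Sum>x\<in>A. h (f x))"
  by (induction A rule: infinite_finite_induct) (auto simp: field_hom_add field_hom_0)

lemma field_hom_of_nat: "h (of_nat n) = of_nat n"
  by (induction n) (simp_all add: field_hom_add field_hom_0 field_hom_1)

lemma field_hom_eq_0_iff [simp]: "h x = 0 \<longleftrightarrow> x = 0"
proof
  assume hx: "h x = 0"
  show "x = 0"
  proof (rule ccontr)
    assume "x \<noteq> 0"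
    then have "h x * h (inverse x) = 1" by (simp flip: field_hom_mult add: field_hom_1)
    then show False using hx by simp
  qed
qed (simp add: field_hom_0)

lemma field_hom_poly: "h (poly p x) = poly (map_poly h p) (h x)"
  by (induction p) (simp_all add: map_poly_pCons field_hom_0 field_hom_add field_hom_mult)

lemma map_poly_field_hom_add: "map_poly h (p + q) = map_poly h p + map_poly h q"
  by (simp add: poly_eq_iff coeff_map_poly field_hom_0 field_hom_add)

lemma map_poly_field_hom_mult: "map_poly h (p * q) = map_poly h p * map_poly h q"
  by (simp add: poly_eq_iff coeff_map_poly coeff_mult field_hom_0 field_hom_sum field_hom_mult)

lemma map_poly_field_hom_pderiv: "map_poly h (pderiv p) = pderiv (map_poly h p)"
  by (simp add: poly_eq_iff coeff_map_poly coeff_pderiv field_hom_0 field_hom_mult field_hom_of_nat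
      del: of_nat_Suc)

end

lemma field_hom_comp: "field_hom g \<Longrightarrow> field_hom h \<Longrightarrow> field_hom (g \<circ> h)"
  by (simp add: field_hom_def)

lemma field_hom_rf_const: "field_hom rf_const"
  by (simp add: field_hom_def rf_const_add rf_const_mult)

lemma vge_completion_iff: "is_completion v w \<iota> \<Longrightarrow> vge w n (\<iota> x) \<longleftrightarrow> vge v n x"
  by (cases "x = 0") (simp_all add: vge_def is_completion_def field_hom_0)

context
  fixes w :: "'b::field \<Rightarrow> int"
  assumes w: "discrete_valuation w"
begin

lemma vge_poly:
  assumes "\<And>i. vge w 0 (coeff F i)" "vge w 0 z"
  shows "vge w 0 (poly F z)"
  using assms(1)
proof (induction F)
  case (pCons a F)
  have "vge w (0 + 0) (z * poly F z)"
    using pCons by (intro vge_mult[OF w assms(2)]) (metis coeff_pCons_Suc)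
  then show ?case using pCons.prems[of 0] by (simp add: vge_add[OF w])
qed simp

lemma vge_poly_diff:
  assumes "\<And>i. vge w 0 (coeff F i)" "vge w 0 z1" "vge w 0 z2" "vge w n (z1 - z2)"
  shows "vge w n (poly F z1 - poly F z2)"
  using assms(1)
proof (induction F)
  case (pCons a F)
  then have F: "vge w 0 (coeff F i)" for i by (metis coeff_pCons_Suc)
  then have IH: "vge w n (poly F z1 - poly F z2)" using pCons.IH by blast
  have "poly (pCons a F) z1 - poly (pCons a F) z2 =
        z1 * (poly F z1 - poly F z2) + (z1 - z2) * poly F z2"
    by (simp add: algebra_simps)
  moreover have "vge w (0 + n) (z1 * (poly F z1 - poly F z2))"
    using IH by (intro vge_mult[OF w assms(2)])
  moreover have "vge w (n + 0) ((z1 - z2) * poly F z2)"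
    using F by (intro vge_mult[OF w assms(4)] vge_poly assms(3))
  ultimately show ?case by (simp add: vge_add[OF w])
qed simp

end

section \<open>Higher derivations at simple roots\<close>

lemma coprime_poly_bezout:
  fixes a b :: "'a::field poly"
  assumes "coprime a b"
  shows "\<exists>x y. x * a + y * b = 1"
proof -
  define I where "I = {p. \<exists>x y. p = x * a + y * b}"
  have ab: "a \<in> I" "b \<in> I"
    unfolding I_def by (fastforce intro: exI[of _ 0])+
  have "a \<noteq> 0 \<or> b \<noteq> 0" using assms by auto
  then obtain p0 where "p0 \<in> I \<and> p0 \<noteq> 0" using ab by blast
  then obtain g where g: "g \<in> I" "g \<noteq> 0"
    and g_min: "\<And>p. p \<in> I \<Longrightarrow> p \<noteq> 0 \<Longrightarrow> degree g \<le> degree p"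
    using ex_has_least_nat[of "\<lambda>p. p \<in> I \<and> p \<noteq> 0" p0 degree] by blast
  obtain xg yg where gxy: "g = xg * a + yg * b" using g(1) unfolding I_def by blast
  have g_dvd: "g dvd p" if "p \<in> I" for p
  proof -
    obtain xp yp where pxy: "p = xp * a + yp * b" using \<open>p \<in> I\<close> unfolding I_def by blast
    define k where "k = p div g"
    have "p mod g = p - k * g" by (simp add: k_def minus_div_mult_eq_mod)
    also have "\<dots> = (xp - k * xg) * a + (yp - k * yg) * b"
      unfolding pxy gxy by (simp add: algebra_simps)
    finally have "p mod g = (xp - k * xg) * a + (yp - k * yg) * b" .
    then have "p mod g \<in> I" unfolding I_def by blast
    have "p mod g = 0"
    proof (rule ccontr)
      assume "p mod g \<noteq> 0"
      then have "degree (p mod g) < degree g" using degree_mod_less'[OF g(2)] by blast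
      then show False using g_min[OF \<open>p mod g \<in> I\<close> \<open>p mod g \<noteq> 0\<close>] by simp
    qed
    then show ?thesis by (simp add: dvd_eq_mod_eq_0)
  qed
  have "is_unit g" using assms g_dvd[OF ab(1)] g_dvd[OF ab(2)] by (rule coprime_common_divisor)
  then obtain k where k: "1 = g * k" by (auto elim!: dvdE)
  have "(k * xg) * a + (k * yg) * b = 1" using k gxy by (simp add: algebra_simps)
  then show ?thesis by blast
qed

lemma separable_root_simple:
  assumes "separable_poly f" "field_hom h" "poly (map_poly h f) c = 0"
  shows "poly (pderiv (map_poly h f)) c \<noteq> 0"
proof -
  obtain a b where "a * f + b * pderiv f = 1"
    using assms(1) coprime_poly_bezout unfolding separable_poly_def by blast
  then have "poly (map_poly h (a * f + b * pderiv f)) c = 1"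
    using assms(2) by (simp add: field_hom_1)
  then have "poly (map_poly h b) c * poly (pderiv (map_poly h f)) c = 1"
    using assms(2,3) by (simp add: map_poly_field_hom_add map_poly_field_hom_mult
        map_poly_field_hom_pderiv)
  then show ?thesis by auto
qed

context
  fixes D :: "nat \<Rightarrow> 'b::field \<Rightarrow> 'b"
  assumes D_0: "D 0 = id"
    and D_add: "\<And>j x y. D j (x + y) = D j x + D j y"
    and D_mult: "\<And>j x y. D j (x * y) = (\<Sum>k\<le>j. D k x * D (j - k) y)"
begin

lemma higher_derivation_zero: "D j 0 = 0"
  using D_add[of j 0 0] by (metis add.right_neutral add_left_cancel)

lemma higher_derivation_mult_constant:
  assumes "\<And>k. 0 < k \<Longrightarrow> D k c = 0"
  shows "D j (c * x) = c * D j x"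
proof -
  have "D j (c * x) = (\<Sum>k\<le>j. if k = 0 then c * D j x else 0)"
    unfolding D_mult by (rule sum.cong) (auto simp: D_0 assms)
  then show ?thesis by simp
qed

lemma higher_derivation_poly_first_nonzero:
  assumes "0 < k" "\<And>m. 0 < m \<Longrightarrow> m < k \<Longrightarrow> D m c = 0" "\<And>i. D k (coeff F i) = 0"
  shows "D k (poly F c) = poly (pderiv F) c * D k c"
  using assms(3)
proof (induction F)
  case (pCons a F)
  let ?z = "poly F c"
  have "D k (c * ?z) = (\<Sum>m\<le>k. (if m = 0 then c * D k ?z else 0) + (if m = k then D k c * ?z else 0))"
    unfolding D_mult by (rule sum.cong) (use assms(1,2) D_0 in auto)
  also have "\<dots> = c * D k ?z + D k c * ?z" by (simp add: sum.distrib)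
  finally have "D k (poly (pCons a F) c) = D k a + c * D k ?z + D k c * ?z" by (simp add: D_add)
  moreover have "D k ?z = poly (pderiv F) c * D k c"
    using pCons by (metis coeff_pCons_Suc)
  moreover have "D k a = 0" using pCons.prems[of 0] by simp
  ultimately show ?case by (simp add: pderiv_pCons algebra_simps)
qed (simp add: higher_derivation_zero)

lemma higher_derivation_simple_root:
  assumes coeff: "\<And>k i. 0 < k \<Longrightarrow> D k (coeff F i) = 0"
    and root: "poly F c = 0" and simple: "poly (pderiv F) c \<noteq> 0"
  shows "0 < k \<Longrightarrow> D k c = 0"
proof (induction k rule: less_induct)
  case (less k)
  have "poly (pderiv F) c * D k c = D k (poly F c)"
    using less by (intro higher_derivation_poly_first_nonzero[symmetric] coeff) auto
  then show ?case using root simple by (simp add: higher_derivation_zero)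
qed

end

section \<open>A Lipschitz bound for the hyperdifferential operators\<close>

lemma leibniz_bound_cancel:
  fixes v :: "'b::field \<Rightarrow> int" and d :: "nat \<Rightarrow> 'b \<Rightarrow> 'b"
  assumes v: "discrete_valuation v"
    and d_0: "d 0 = id" and d_mult: "\<And>j x y. d j (x * y) = (\<Sum>k\<le>j. d k x * d (j - k) y)"
    and q: "q \<noteq> 0" "x \<noteq> 0"
    and bound_q: "\<And>i. vge v (v q - int i * C) (d i q)"
    and bound_qx: "\<And>i. vge v (v (q * x) - int i * C) (d i (q * x))"
  shows "vge v (v x - int j * C) (d j x)"
proof (induction j rule: less_induct)
  case (less j)
  show ?case
  proof (cases j)
    case 0
    then show ?thesis by (simp add: d_0 vge_self)
  next
    case (Suc n)
    have vqx: "v (q * x) = v q + v x" using valuation_mult[OF v q] .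
    have "d j (q * x) = d 0 q * d j x + (\<Sum>i\<le>n. d (Suc i) q * d (j - Suc i) x)"
      unfolding d_mult Suc sum.atMost_Suc_shift by simp
    then have "q * d j x = d j (q * x) - (\<Sum>i\<le>n. d (Suc i) q * d (j - Suc i) x)"
      by (simp add: d_0)
    moreover have "vge v (v (q * x) - int j * C) (\<Sum>i\<le>n. d (Suc i) q * d (j - Suc i) x)"
    proof (intro vge_sum[OF v])
      fix i assume "i \<in> {..n}"
      then have eq: "v (q * x) - int j * C = (v q - int (Suc i) * C) + (v x - int (j - Suc i) * C)"
        using Suc vqx by (simp add: of_nat_diff algebra_simps)
      have "vge v (v x - int (j - Suc i) * C) (d (j - Suc i) x)" using less.IH Suc by simp
      then show "vge v (v (q * x) - int j * C) (d (Suc i) q * d (j - Suc i) x)"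
        unfolding eq by (rule vge_mult[OF v bound_q])
    qed
    ultimately have "vge v (v (q * x) - int j * C) (q * d j x)"
      using bound_qx by (simp add: vge_diff[OF v])
    then have "vge v (v (q * x) - int j * C - v q) (d j x)" by (rule vge_cancel_left[OF v q(1)])
    then show ?thesis using vqx by (simp add: algebra_simps)
  qed
qed

context
  fixes v :: "'a::field poly fract \<Rightarrow> int"
  assumes place: "place_trivial_on_F v"
begin

lemma place_valuation: "discrete_valuation v"
  using place by (simp add: place_trivial_on_F_def)

lemma vge_rf_const: "vge v 0 (rf_const c)"
  using place by (cases "c = 0") (simp_all add: place_trivial_on_F_def vge_def rf_const_def)

text \<open>Here rf_of_poly [:0, 1:] is T, and v is the place at infinity iff v(T) < 0.\<close>

lemma valuation_rf_of_poly_infinite: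
  assumes "v (rf_of_poly [:0, 1:]) < 0" "p \<noteq> 0"
  shows "v (rf_of_poly p) = int (degree p) * v (rf_of_poly [:0, 1:])"
  using assms(2)
proof (induction p)
  case (pCons a p)
  show ?case
  proof (cases "p = 0")
    case True
    then have "a \<noteq> 0" using pCons.prems by simp
    then show ?thesis using True place by (simp add: place_trivial_on_F_def rf_const_def)
  next
    case False
    define x where "x = rf_of_poly [:0, 1:] * rf_of_poly p"
    have "x \<noteq> 0" using False by (simp add: x_def)
    have "v x = v (rf_of_poly [:0, 1:]) + v (rf_of_poly p)"
      unfolding x_def by (rule valuation_mult[OF place_valuation]) (simp_all add: False)
    then have vx: "v x = int (Suc (degree p)) * v (rf_of_poly [:0, 1:])"
      using pCons.IH[OF False] by (simp add: algebra_simps)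
    moreover have "int (Suc (degree p)) * v (rf_of_poly [:0, 1:]) \<le> 1 * v (rf_of_poly [:0, 1:])"
      by (rule mult_right_mono_neg) (use assms(1) in auto)
    ultimately have "v x + 1 \<le> 0" using assms(1) by linarith
    then have "v (x + rf_const a) = v x"
      by (intro valuation_add_dominated[OF place_valuation \<open>x \<noteq> 0\<close>] vge_mono[OF vge_rf_const])
    moreover have "rf_of_poly (pCons a p) = x + rf_const a"
      unfolding x_def by (subst rf_of_poly_pCons) (simp add: add.commute)
    moreover have "degree (pCons a p) = Suc (degree p)" using False by simp
    ultimately show ?thesis using vx by simp
  qed
qed simp

lemma hasse_poly_bound_infinite:
  assumes "v (rf_of_poly [:0, 1:]) < 0" "p \<noteq> 0"
  shows "vge v (v (rf_of_poly p)) (rf_of_poly (hasse_poly j p))"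
proof (cases "hasse_poly j p = 0")
  case False
  have "int (degree p) * v (rf_of_poly [:0, 1:]) \<le>
      int (degree (hasse_poly j p)) * v (rf_of_poly [:0, 1:])"
    using degree_hasse_poly_le assms(1) by (intro mult_right_mono_neg) simp_all
  moreover have "v (rf_of_poly (hasse_poly j p)) =
      int (degree (hasse_poly j p)) * v (rf_of_poly [:0, 1:])"
    by (rule valuation_rf_of_poly_infinite[OF assms(1) False])
  ultimately show ?thesis
    using valuation_rf_of_poly_infinite[OF assms] False by (simp add: vge_def)
qed simp

lemma vge_rf_of_poly_finite:
  assumes "0 \<le> v (rf_of_poly [:0, 1:])"
  shows "vge v 0 (rf_of_poly p)"
proof (induction p)
  case (pCons a p)
  have "vge v (0 + 0) (rf_of_poly [:0, 1:] * rf_of_poly p)"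
    using vge_mono[OF vge_self[of v "rf_of_poly [:0, 1:]"] assms] pCons.IH
    by (rule vge_mult[OF place_valuation])
  then show ?case by (subst rf_of_poly_pCons) (simp add: vge_add[OF place_valuation vge_rf_const])
qed simp

lemma exists_poly_valuation_pos:
  assumes "0 \<le> v (rf_of_poly [:0, 1:])"
  shows "\<exists>p. p \<noteq> 0 \<and> 0 < v (rf_of_poly p)"
proof (rule ccontr)
  assume none: "\<not> ?thesis"
  have zero: "v (rf_of_poly p) = 0" if "p \<noteq> 0" for p
  proof -
    have "0 \<le> v (rf_of_poly p)" using vge_rf_of_poly_finite[OF assms, of p] that by (simp add: vge_def)
    moreover have "\<not> 0 < v (rf_of_poly p)" using none that by blast
    ultimately show ?thesis by linarith
  qed
  obtain x where x: "x \<noteq> 0" "v x = 1"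
    using place_valuation by (auto simp: discrete_valuation_def)
  obtain p q where pq: "x = Fract p q" "q \<noteq> 0" by (cases x)
  then have "p \<noteq> 0" using x by (auto simp: eq_fract Zero_fract_def)
  have "rf_of_poly q * x = rf_of_poly p" using pq by (simp add: rf_of_poly_mult_Fract)
  then have "v (rf_of_poly q) + v x = v (rf_of_poly p)"
    using valuation_mult[OF place_valuation, of "rf_of_poly q" x] pq(2) x(1) by simp
  then show False using zero[OF \<open>p \<noteq> 0\<close>] zero[OF pq(2)] x by simp
qed

text \<open>At a finite place, a nonzero polynomial P of least degree with v(P) > 0 plays the role of a
  uniformizer on F[T].\<close>

context
  fixes P :: "'a poly"
  assumes finite: "0 \<le> v (rf_of_poly [:0, 1:])"
    and P: "P \<noteq> 0" "0 < v (rf_of_poly P)"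
    and P_least: "\<And>p. p \<noteq> 0 \<Longrightarrow> 0 < v (rf_of_poly p) \<Longrightarrow> degree P \<le> degree p"
begin

lemma uniformizer_dvd:
  assumes "0 < v (rf_of_poly p)"
  shows "P dvd p"
proof (rule ccontr)
  assume "\<not> P dvd p"
  then have r: "p mod P \<noteq> 0" by (simp add: dvd_eq_mod_eq_0)
  have "rf_of_poly p = rf_of_poly P * rf_of_poly (p div P) + rf_of_poly (p mod P)"
    by (simp flip: rf_of_poly_mult rf_of_poly_add)
  then have "rf_of_poly (p mod P) = rf_of_poly p - rf_of_poly P * rf_of_poly (p div P)"
    by simp
  moreover have "vge v 1 (rf_of_poly p)" using assms by (simp add: vge_def)
  moreover have "vge v (v (rf_of_poly P) + 0) (rf_of_poly P * rf_of_poly (p div P))"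
    by (intro vge_mult[OF place_valuation] vge_self vge_rf_of_poly_finite[OF finite])
  then have "vge v 1 (rf_of_poly P * rf_of_poly (p div P))"
    using P(2) by (auto elim: vge_mono)
  ultimately have "vge v 1 (rf_of_poly (p mod P))" by (simp add: vge_diff[OF place_valuation])
  then have "degree P \<le> degree (p mod P)" using r by (intro P_least) (simp_all add: vge_def)
  then show False using degree_mod_less'[OF P(1) r] by simp
qed

lemma uniformizer_factorization:
  assumes "p \<noteq> 0"
  shows "\<exists>k u. p = P ^ k * u \<and> u \<noteq> 0 \<and> v (rf_of_poly u) = 0"
  using assms
proof (induction "nat (v (rf_of_poly p))" arbitrary: p rule: less_induct)
  case less
  have nonneg: "0 \<le> v (rf_of_poly p)" if "p \<noteq> 0" for p
    using vge_rf_of_poly_finite[OF finite, of p] that by (simp add: vge_def)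
  show ?case
  proof (cases "v (rf_of_poly p) = 0")
    case True
    then show ?thesis using less.prems by (intro exI[of _ 0] exI[of _ p]) simp
  next
    case False
    then have "P dvd p" using nonneg[OF less.prems] by (intro uniformizer_dvd) simp
    then obtain a where a: "p = P * a" by (rule dvdE)
    then have "a \<noteq> 0" using less.prems by auto
    have "v (rf_of_poly p) = v (rf_of_poly P) + v (rf_of_poly a)"
      using a P(1) \<open>a \<noteq> 0\<close> by (simp add: rf_of_poly_mult valuation_mult[OF place_valuation])
    then have "nat (v (rf_of_poly a)) < nat (v (rf_of_poly p))"
      using P(2) nonneg[OF \<open>a \<noteq> 0\<close>] by simp
    then obtain k u where "a = P ^ k * u" "u \<noteq> 0" "v (rf_of_poly u) = 0"
      using less.hyps \<open>a \<noteq> 0\<close> by blast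
    then show ?thesis using a by (intro exI[of _ "Suc k"] exI[of _ u]) simp
  qed
qed

lemma hasse_poly_power_uniformizer_bound:
  "vge v ((int k - int j) * v (rf_of_poly P)) (rf_of_poly (hasse_poly j (P ^ k)))"
proof (induction k arbitrary: j)
  case 0
  have "vge v 0 (rf_of_poly (hasse_poly j (P ^ 0)))" by (rule vge_rf_of_poly_finite[OF finite])
  then show ?case by (rule vge_mono) (use P(2) in \<open>simp add: mult_le_0_iff\<close>)
next
  case (Suc k)
  let ?e = "v (rf_of_poly P)"
  have "rf_of_poly (hasse_poly j (P ^ Suc k)) =
        (\<Sum>i\<le>j. rf_of_poly (hasse_poly i P) * rf_of_poly (hasse_poly (j - i) (P ^ k)))"
    by (simp add: hasse_poly_mult rf_of_poly_sum rf_of_poly_mult)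
  also have "vge v ((int (Suc k) - int j) * ?e) \<dots>"
  proof (rule vge_sum[OF place_valuation])
    fix i assume i: "i \<in> {..j}"
    show "vge v ((int (Suc k) - int j) * ?e)
            (rf_of_poly (hasse_poly i P) * rf_of_poly (hasse_poly (j - i) (P ^ k)))"
    proof (cases "i = 0")
      case True
      have "vge v (?e + (int k - int j) * ?e) (rf_of_poly P * rf_of_poly (hasse_poly j (P ^ k)))"
        using vge_mult[OF place_valuation vge_self Suc.IH] .
      then show ?thesis using True by (simp add: algebra_simps)
    next
      case False
      have "int (Suc k) - int j \<le> int k - int (j - i)" using False i by (simp add: of_nat_diff)
      then have "(int (Suc k) - int j) * ?e \<le> 0 + (int k - int (j - i)) * ?e"
        using P(2) by (simp add: mult_right_mono)
      then show ?thesis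
        using vge_mult[OF place_valuation vge_rf_of_poly_finite[OF finite] Suc.IH] vge_mono by blast
    qed
  qed
  finally show ?case .
qed

lemma hasse_poly_bound_finite:
  assumes "p \<noteq> 0"
  shows "vge v (v (rf_of_poly p) - int j * v (rf_of_poly P)) (rf_of_poly (hasse_poly j p))"
proof -
  let ?e = "v (rf_of_poly P)"
  obtain k u where ku: "p = P ^ k * u" "u \<noteq> 0" "v (rf_of_poly u) = 0"
    using uniformizer_factorization[OF assms] by blast
  have vp: "v (rf_of_poly p) = int k * ?e"
    using ku P(1) by (simp add: rf_of_poly_mult rf_of_poly_power valuation_mult[OF place_valuation]
        valuation_power[OF place_valuation])
  have "rf_of_poly (hasse_poly j p) =
        (\<Sum>i\<le>j. rf_of_poly (hasse_poly i (P ^ k)) * rf_of_poly (hasse_poly (j - i) u))"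
    by (simp add: ku(1) hasse_poly_mult rf_of_poly_sum rf_of_poly_mult)
  also have "vge v (v (rf_of_poly p) - int j * ?e) \<dots>"
  proof (rule vge_sum[OF place_valuation])
    fix i assume "i \<in> {..j}"
    then have "v (rf_of_poly p) - int j * ?e \<le> (int k - int i) * ?e + 0"
      using vp P(2) by (simp add: algebra_simps)
    then show "vge v (v (rf_of_poly p) - int j * ?e)
        (rf_of_poly (hasse_poly i (P ^ k)) * rf_of_poly (hasse_poly (j - i) u))"
      using vge_mult[OF place_valuation hasse_poly_power_uniformizer_bound
          vge_rf_of_poly_finite[OF finite]] vge_mono by blast
  qed
  finally show ?thesis .
qed

end

lemma hasse_poly_bound:
  "\<exists>C. \<forall>j p. p \<noteq> 0 \<longrightarrow> vge v (v (rf_of_poly p) - int j * C) (rf_of_poly (hasse_poly j p))"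
proof (cases "v (rf_of_poly [:0, 1:]) < 0")
  case True
  then show ?thesis using hasse_poly_bound_infinite by (intro exI[of _ 0]) auto
next
  case False
  then have finite: "0 \<le> v (rf_of_poly [:0, 1:])" by simp
  obtain P0 where "P0 \<noteq> 0 \<and> 0 < v (rf_of_poly P0)" using exists_poly_valuation_pos[OF finite] by blast
  then obtain P where P: "P \<noteq> 0" "0 < v (rf_of_poly P)"
    and P_least: "\<And>p. p \<noteq> 0 \<Longrightarrow> 0 < v (rf_of_poly p) \<Longrightarrow> degree P \<le> degree p"
    using ex_has_least_nat[of "\<lambda>p. p \<noteq> 0 \<and> 0 < v (rf_of_poly p)" P0 degree] by blast
  then show ?thesis
    using hasse_poly_bound_finite[OF finite P P_least] by (intro exI[of _ "v (rf_of_poly P)"]) auto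
qed

lemma hasse_rf_bound: "\<exists>C. \<forall>j x. x \<noteq> 0 \<longrightarrow> vge v (v x - int j * C) (hasse_rf j x)"
proof -
  obtain C where C:
    "\<And>j p. p \<noteq> 0 \<Longrightarrow> vge v (v (rf_of_poly p) - int j * C) (hasse_rf j (rf_of_poly p))"
    using hasse_poly_bound by (auto simp: hasse_rf_rf_of_poly)
  have hasse_rf: "hasse_rf 0 = (id :: 'a poly fract \<Rightarrow> _)"
    "\<And>j x y :: 'a poly fract. hasse_rf j (x * y) = (\<Sum>k\<le>j. hasse_rf k x * hasse_rf (j - k) y)"
    using higher_derivation_hasse_rf unfolding higher_derivation_def by blast+
  have "vge v (v x - int j * C) (hasse_rf j x)" if "x \<noteq> 0" for j x
  proof -
    obtain p q where x: "x = Fract p q" "q \<noteq> 0" by (cases x)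
    then have "p \<noteq> 0" using \<open>x \<noteq> 0\<close> by (auto simp: fract_collapse)
    have qx: "rf_of_poly q * x = rf_of_poly p" using x by (simp add: rf_of_poly_mult_Fract)
    show ?thesis
    proof (rule leibniz_bound_cancel[OF place_valuation hasse_rf _ \<open>x \<noteq> 0\<close>])
      show "rf_of_poly q \<noteq> 0" using x(2) by simp
      show "vge v (v (rf_of_poly q) - int i * C) (hasse_rf i (rf_of_poly q))" for i
        using C[OF x(2)] .
      show "vge v (v (rf_of_poly q * x) - int i * C) (hasse_rf i (rf_of_poly q * x))" for i
        unfolding qx using C[OF \<open>p \<noteq> 0\<close>] .
    qed
  qed
  then show ?thesis by blast
qed

end

section \<open>Extension by continuity to the completion\<close>

locale continuous_extension =
  fixes v :: "'a::field \<Rightarrow> int" and w :: "'b::field \<Rightarrow> int" and \<iota> :: "'a \<Rightarrow> 'b"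
    and d :: "nat \<Rightarrow> 'a \<Rightarrow> 'a" and C :: int
  assumes completion: "is_completion v w \<iota>"
    and d_0: "d 0 = id"
    and d_add: "\<And>j x y. d j (x + y) = d j x + d j y"
    and d_mult: "\<And>j x y. d j (x * y) = (\<Sum>k\<le>j. d k x * d (j - k) y)"
    and d_bound: "\<And>j x. x \<noteq> 0 \<Longrightarrow> vge v (v x - int j * C) (d j x)"
begin

lemma w: "discrete_valuation w"
  using completion by (simp add: is_completion_def)

lemma \<iota>: "field_hom \<iota>"
  using completion by (simp add: is_completion_def)

lemma dense: "\<exists>x. vge w N (y - \<iota> x)"
  using completion by (simp add: is_completion_def vclose_iff_vge)

lemma d_diff: "d j (x - y) = d j x - d j y"
  using d_add[of j "x - y" y] by (simp add: eq_diff_eq)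

lemma d_zero: "d j 0 = 0"
  using d_diff[of j 0 0] by simp

lemma vge_d:
  assumes "vge v n x"
  shows "vge v (n - int j * C) (d j x)"
proof (cases "x = 0")
  case False
  with assms have "n \<le> v x" by (simp add: vge_def)
  then show ?thesis using d_bound[OF False, of j] vge_mono by fastforce
qed (simp add: d_zero)

lemma vge_iota_d_diff:
  assumes "vge w n (\<iota> x - \<iota> y)"
  shows "vge w (n - int j * C) (\<iota> (d j x) - \<iota> (d j y))"
proof -
  have "vge v n (x - y)"
    using assms by (simp add: vge_completion_iff[OF completion] flip: field_hom_diff[OF \<iota>])
  then have "vge v (n - int j * C) (d j (x - y))" by (rule vge_d)
  then show ?thesis by (simp add: vge_completion_iff[OF completion] flip: field_hom_diff[OF \<iota>] d_diff)
qed

definition limit_along :: "'b \<Rightarrow> ('a \<Rightarrow> 'a) \<Rightarrow> 'b \<Rightarrow> bool" where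
  "limit_along y g l \<longleftrightarrow> (\<forall>N. \<exists>M. \<forall>x. vge w M (y - \<iota> x) \<longrightarrow> vge w N (l - \<iota> (g x)))"

definition extension :: "nat \<Rightarrow> 'b \<Rightarrow> 'b" where
  "extension j y = (SOME l. limit_along y (d j) l)"

lemma limit_along_unique:
  assumes "limit_along y g l1" "limit_along y g l2"
  shows "l1 = l2"
proof -
  have "vge w N (l1 - l2)" for N
  proof -
    obtain M1 M2 where
      M1: "\<And>x. vge w M1 (y - \<iota> x) \<Longrightarrow> vge w N (l1 - \<iota> (g x))" and
      M2: "\<And>x. vge w M2 (y - \<iota> x) \<Longrightarrow> vge w N (l2 - \<iota> (g x))"
      using assms unfolding limit_along_def by metis
    obtain x where x: "vge w (max M1 M2) (y - \<iota> x)" using dense by blast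
    have "vge w N (l1 - \<iota> (g x))" "vge w N (l2 - \<iota> (g x))"
      by (intro M1 M2 vge_mono[OF x]; simp)+
    then have "vge w N ((l1 - \<iota> (g x)) - (l2 - \<iota> (g x)))" by (rule vge_diff[OF w])
    then show ?thesis by simp
  qed
  then show ?thesis using vge_all_imp_zero[OF w, of "l1 - l2"] by simp
qed

text \<open>The limit is that of \<iota> (d j (x n)) for any sequence with \<iota> (x n) \<rightarrow> y, a Cauchy sequence
  because d j is Lipschitz.\<close>

lemma limit_along_exists: "\<exists>l. limit_along y (d j) l"
proof -
  have "\<forall>n. \<exists>x. vge w (int n) (y - \<iota> x)" using dense by blast
  then obtain x where x: "\<And>n. vge w (int n) (y - \<iota> (x n))" by metis
  have close: "vge w (M - int j * C) (\<iota> (d j a) - \<iota> (d j b))"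
    if "vge w M (y - \<iota> a)" "vge w M (y - \<iota> b)" for M a b
    using vge_diff[OF w that(2,1)] by (intro vge_iota_d_diff) simp
  have "vcauchy w (\<lambda>n. \<iota> (d j (x n)))"
    unfolding vcauchy_def vclose_iff_vge
  proof
    fix N
    show "\<exists>M. \<forall>m n. M \<le> m \<longrightarrow> M \<le> n \<longrightarrow> vge w N (\<iota> (d j (x m)) - \<iota> (d j (x n)))"
    proof (intro exI allI impI)
      fix m n assume "nat (N + int j * C) \<le> m" "nat (N + int j * C) \<le> n"
      then have "vge w (N + int j * C) (y - \<iota> (x m))" "vge w (N + int j * C) (y - \<iota> (x n))"
        by (intro vge_mono[OF x]; linarith)+
      then show "vge w N (\<iota> (d j (x m)) - \<iota> (d j (x n)))" using close by fastforce
    qed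
  qed
  then obtain l where l: "vconverges w (\<lambda>n. \<iota> (d j (x n))) l"
    using completion by (auto simp: is_completion_def vcomplete_def)
  have "limit_along y (d j) l"
    unfolding limit_along_def
  proof (intro allI exI impI)
    fix N a assume a: "vge w (N + int j * C) (y - \<iota> a)"
    obtain n0 where n0: "\<And>n. n0 \<le> n \<Longrightarrow> vge w N (\<iota> (d j (x n)) - l)"
      using l unfolding vconverges_def vclose_iff_vge by blast
    define n where "n = max n0 (nat (N + int j * C))"
    have "vge w (N + int j * C) (y - \<iota> (x n))"
      by (rule vge_mono[OF x]) (simp add: n_def)
    then have "vge w N (\<iota> (d j (x n)) - \<iota> (d j a))" using close[OF _ a] by simp
    moreover have "vge w N (\<iota> (d j (x n)) - l)" using n0 by (simp add: n_def)
    ultimately have "vge w N ((\<iota> (d j (x n)) - \<iota> (d j a)) - (\<iota> (d j (x n)) - l))"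
      by (rule vge_diff[OF w])
    then show "vge w N (l - \<iota> (d j a))" by simp
  qed
  then show ?thesis ..
qed

lemma limit_along_extension: "limit_along y (d j) (extension j y)"
  unfolding extension_def using limit_along_exists by (rule someI_ex)

lemma extension_eqI: "limit_along y (d j) l \<Longrightarrow> extension j y = l"
  using limit_along_extension limit_along_unique by blast

lemma extension_iota: "extension j (\<iota> x) = \<iota> (d j x)"
proof (rule extension_eqI)
  show "limit_along (\<iota> x) (d j) (\<iota> (d j x))"
    unfolding limit_along_def
  proof (intro allI exI impI)
    fix N a assume "vge w (N + int j * C) (\<iota> x - \<iota> a)"
    then show "vge w N (\<iota> (d j x) - \<iota> (d j a))" using vge_iota_d_diff[of "N + int j * C" x a j] by simp
  qed
qed

lemma extension_0: "extension 0 = id"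
proof
  show "extension 0 y = id y" for y
    by (rule extension_eqI) (auto simp: limit_along_def d_0)
qed

lemma extension_add: "extension j (y1 + y2) = extension j y1 + extension j y2"
proof (rule extension_eqI)
  show "limit_along (y1 + y2) (d j) (extension j y1 + extension j y2)"
    unfolding limit_along_def
  proof
    fix N
    obtain M1 M2 where
      M1: "\<And>x. vge w M1 (y1 - \<iota> x) \<Longrightarrow> vge w N (extension j y1 - \<iota> (d j x))" and
      M2: "\<And>x. vge w M2 (y2 - \<iota> x) \<Longrightarrow> vge w N (extension j y2 - \<iota> (d j x))"
      using limit_along_extension[of y1 j] limit_along_extension[of y2 j] unfolding limit_along_def by metis
    show "\<exists>M. \<forall>x. vge w M (y1 + y2 - \<iota> x) \<longrightarrow> vge w N (extension j y1 + extension j y2 - \<iota> (d j x))"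
    proof (intro exI allI impI)
      fix x assume x: "vge w (max M1 M2) (y1 + y2 - \<iota> x)"
      obtain x1 where x1: "vge w (max M1 M2) (y1 - \<iota> x1)" using dense by blast
      have "vge w (max M1 M2) ((y1 + y2 - \<iota> x) - (y1 - \<iota> x1))" using vge_diff[OF w x x1] .
      then have "vge w (max M1 M2) (y2 - \<iota> (x - x1))"
        by (simp add: field_hom_diff[OF \<iota>] algebra_simps)
      then have "vge w N ((extension j y1 - \<iota> (d j x1)) + (extension j y2 - \<iota> (d j (x - x1))))"
        using x1 by (intro vge_add[OF w] M1 M2) (auto elim: vge_mono)
      then show "vge w N (extension j y1 + extension j y2 - \<iota> (d j x))"
        by (simp add: d_diff field_hom_diff[OF \<iota>] algebra_simps)
    qed
  qed
qed

lemma extension_diff: "extension j (y1 - y2) = extension j y1 - extension j y2"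
  using extension_add[of j "y1 - y2" y2] by simp

lemma vge_extension:
  assumes y: "vge w n y"
  shows "vge w (n - int j * C) (extension j y)"
proof -
  obtain M where M: "\<And>x. vge w M (y - \<iota> x) \<Longrightarrow> vge w (n - int j * C) (extension j y - \<iota> (d j x))"
    using limit_along_extension[of y j] unfolding limit_along_def by metis
  obtain x where x: "vge w (max M n) (y - \<iota> x)" using dense by blast
  have "vge w n (y - (y - \<iota> x))" using vge_diff[OF w y vge_mono[OF x]] by simp
  then have "vge w (n - int j * C) (\<iota> (d j x))" by (simp add: vge_completion_iff[OF completion] vge_d)
  moreover have "vge w (n - int j * C) (extension j y - \<iota> (d j x))"
    by (rule M, rule vge_mono[OF x]) simp
  ultimately have "vge w (n - int j * C) (\<iota> (d j x) + (extension j y - \<iota> (d j x)))"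
    by (rule vge_add[OF w])
  then show ?thesis by simp
qed

lemma extension_continuous: "vcontinuous w (extension j)"
  unfolding vcontinuous_def vclose_iff_vge
proof (intro allI exI impI)
  fix x N y assume "vge w (N + int j * C) (y - x)"
  then have "vge w N (extension j (y - x))" using vge_extension[of "N + int j * C" "y - x" j] by simp
  then show "vge w N (extension j y - extension j x)" by (simp add: extension_diff)
qed

definition leibniz_defect :: "nat \<Rightarrow> 'b \<Rightarrow> 'b \<Rightarrow> 'b" where
  "leibniz_defect j y z = extension j (y * z) - (\<Sum>k\<le>j. extension k y * extension (j - k) z)"

lemma leibniz_defect_add_left:
  "leibniz_defect j (y1 + y2) z = leibniz_defect j y1 z + leibniz_defect j y2 z"
  by (simp add: leibniz_defect_def distrib_right extension_add sum.distrib algebra_simps)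

lemma leibniz_defect_add_right:
  "leibniz_defect j y (z1 + z2) = leibniz_defect j y z1 + leibniz_defect j y z2"
  by (simp add: leibniz_defect_def distrib_left extension_add sum.distrib algebra_simps)

lemma leibniz_defect_iota: "leibniz_defect j (\<iota> x) (\<iota> y) = 0"
  by (simp add: leibniz_defect_def extension_iota d_mult field_hom_sum[OF \<iota>] field_hom_mult[OF \<iota>]
      flip: field_hom_mult[OF \<iota>])

lemma vge_leibniz_defect:
  assumes "vge w a y" "vge w b z"
  shows "vge w (a + b - int j * C) (leibniz_defect j y z)"
  unfolding leibniz_defect_def
proof (intro vge_diff[OF w] vge_sum[OF w])
  show "vge w (a + b - int j * C) (extension j (y * z))"
    using vge_extension[OF vge_mult[OF w assms]] .
  fix k assume "k \<in> {..j}"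
  then have eq: "a + b - int j * C = (a - int k * C) + (b - int (j - k) * C)"
    by (simp add: of_nat_diff algebra_simps)
  show "vge w (a + b - int j * C) (extension k y * extension (j - k) z)"
    unfolding eq by (intro vge_mult[OF w] vge_extension assms)
qed

text \<open>The defect is biadditive, vanishes on the dense image of \<iota>, and is bounded;
  approximating y and z by \<iota> x1 and \<iota> x2 thus makes it arbitrarily small.\<close>

lemma extension_mult: "extension j (y * z) = (\<Sum>k\<le>j. extension k y * extension (j - k) z)"
proof -
  have "vge w N (leibniz_defect j y z)" for N
  proof -
    define M where "M = N + int j * C"
    obtain x2 where x2: "vge w (M - w y) (z - \<iota> x2)" using dense by blast
    obtain x1 where x1: "vge w (max (w y) (M - w z)) (y - \<iota> x1)" using dense by blast
    have "vge w (w y) (y - (y - \<iota> x1))"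
      using vge_diff[OF w vge_self[of w y] vge_mono[OF x1 max.cobounded1]] .
    then have "vge w (w y) (\<iota> x1)" by simp
    have "leibniz_defect j y z = leibniz_defect j (y - \<iota> x1) z + leibniz_defect j (\<iota> x1) z"
      using leibniz_defect_add_left[of j "y - \<iota> x1" "\<iota> x1" z] by simp
    also have "leibniz_defect j (\<iota> x1) z =
        leibniz_defect j (\<iota> x1) (z - \<iota> x2) + leibniz_defect j (\<iota> x1) (\<iota> x2)"
      using leibniz_defect_add_right[of j "\<iota> x1" "z - \<iota> x2" "\<iota> x2"] by simp
    finally have "leibniz_defect j y z = leibniz_defect j (y - \<iota> x1) z +
        (leibniz_defect j (\<iota> x1) (z - \<iota> x2) + leibniz_defect j (\<iota> x1) (\<iota> x2))" .
    moreover have "vge w N (leibniz_defect j (y - \<iota> x1) z)"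
      using vge_leibniz_defect[OF vge_mono[OF x1 max.cobounded2] vge_self[of w z], of j]
      by (simp add: M_def)
    moreover have "vge w N (leibniz_defect j (\<iota> x1) (z - \<iota> x2))"
      using vge_leibniz_defect[OF \<open>vge w (w y) (\<iota> x1)\<close> x2, of j] by (simp add: M_def)
    ultimately show ?thesis by (simp add: leibniz_defect_iota vge_add[OF w])
  qed
  then have "leibniz_defect j y z = 0" by (rule vge_all_imp_zero[OF w])
  then show ?thesis by (simp add: leibniz_defect_def)
qed

lemma higher_derivation_extension:
  assumes "\<And>c k. c \<in> K \<Longrightarrow> 0 < k \<Longrightarrow> extension k c = 0"
  shows "higher_derivation K extension"
  unfolding higher_derivation_def
proof (intro conjI allI impI)
  show "extension j (r * x) = r * extension j x" if "r \<in> K" for j r x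
    using assms[OF that]
    by (rule higher_derivation_mult_constant[OF extension_0 extension_add extension_mult])
qed (simp_all add: extension_0 extension_add extension_mult)

lemma extension_separable_root:
  assumes h: "field_hom h" and h_const: "\<And>a k. 0 < k \<Longrightarrow> extension k (h a) = 0"
    and f: "separable_poly f" "poly (map_poly h f) c = 0" and k: "0 < k"
  shows "extension k c = 0"
proof (rule higher_derivation_simple_root[OF extension_0 extension_add extension_mult _ f(2)
      separable_root_simple[OF f(1) h f(2)] k])
  show "extension k (coeff (map_poly h f) i) = 0" if "0 < k" for k i
    using that by (simp add: coeff_map_poly field_hom_0[OF h] h_const)
qed

end

section \<open>Coefficient fields\<close>

lemma poly_in_subfield:
  assumes "subfield K" "\<And>i. coeff F i \<in> K" "c \<in> K"
  shows "poly F c \<in> K"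
  using assms(2)
proof (induction F)
  case (pCons a F)
  then show ?case using assms(1,3) by (simp add: subfield_def) (metis coeff_pCons_0 coeff_pCons_Suc)
qed (use assms(1) in \<open>simp add: subfield_def\<close>)

text \<open>Each element c of a coefficient field containing F is a root of a separable polynomial over F:
  take one vanishing modulo the maximal ideal at an approximation of c in F(T); its value at c then
  lies in the maximal ideal and in K, hence is 0.\<close>

lemma coefficient_field_separable_root:
  fixes v :: "'a::field poly fract \<Rightarrow> int" and w :: "'b::field \<Rightarrow> int"
  assumes place: "place_trivial_on_F v" and separable: "residue_separable v"
    and completion: "is_completion v w \<iota>"
    and K: "coefficient_field w K" "\<iota> ` range rf_const \<subseteq> K" and c: "c \<in> K"
  shows "\<exists>f. separable_poly f \<and> poly (map_poly (\<iota> \<circ> rf_const) f) c = 0"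
proof -
  have w: "discrete_valuation w" and \<iota>: "field_hom \<iota>"
    using completion by (simp_all add: is_completion_def)
  have coeff_vge: "vge w 0 (coeff (map_poly (\<iota> \<circ> rf_const) f) i)" for f i
    by (simp add: coeff_map_poly field_hom_0[OF \<iota>] vge_completion_iff[OF completion]
        vge_rf_const[OF place])
  have c0: "vge w 0 c" using K c by (simp add: coefficient_field_def in_valring_iff_vge)
  obtain x where x: "vge w 1 (c - \<iota> x)"
    using completion unfolding is_completion_def vclose_iff_vge by blast
  have "vge w 0 (c - (c - \<iota> x))" using vge_diff[OF w c0 vge_mono[OF x]] by simp
  then have x0: "vge w 0 (\<iota> x)" by simp
  then obtain f where f: "separable_poly f" "in_maxideal v (poly (map_poly rf_const f) x)"
    using separable by (auto simp: residue_separable_def in_valring_iff_vge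
        vge_completion_iff[OF completion])
  let ?F = "map_poly (\<iota> \<circ> rf_const) f"
  have "\<iota> (poly (map_poly rf_const f) x) = poly ?F (\<iota> x)"
    by (simp add: field_hom_poly[OF \<iota>] map_poly_map_poly field_hom_0[OF \<iota>])
  then have "vge w 1 (poly ?F (\<iota> x))"
    using f(2) by (simp add: in_maxideal_iff_vge flip: vge_completion_iff[OF completion])
  moreover have "vge w 1 (poly ?F c - poly ?F (\<iota> x))"
    by (rule vge_poly_diff[OF w coeff_vge c0 x0 x])
  ultimately have "in_maxideal w (poly ?F c - 0)"
    using vge_add[OF w] by (fastforce simp: in_maxideal_iff_vge)
  moreover have "poly ?F c \<in> K"
    using K c by (intro poly_in_subfield) (auto simp: coefficient_field_def coeff_map_poly
        field_hom_0[OF \<iota>])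
  moreover have "0 \<in> K" using K by (simp add: coefficient_field_def subfield_def)
  ultimately have "poly ?F c = 0" using K by (simp add: coefficient_field_def)
  then show ?thesis using f(1) by blast
qed

theorem theorem4p3:
  fixes v :: "'a::field poly fract \<Rightarrow> int"
    and w :: "'e::field \<Rightarrow> int"
    and \<iota> :: "'a poly fract \<Rightarrow> 'e"
  assumes "place_trivial_on_F v"
    and "residue_separable v"
    and "is_completion v w \<iota>"
  shows "\<exists>D :: nat \<Rightarrow> 'e \<Rightarrow> 'e.
           (\<forall>j. vcontinuous w (D j)) \<and>
           (\<forall>j x. D j (\<iota> x) = \<iota> (hasse_rf j x)) \<and>
           (\<forall>K. coefficient_field w K \<and> \<iota> ` range rf_const \<subseteq> K \<longrightarrow> higher_derivation K D)"
proof -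
  obtain C where C: "\<And>j x. x \<noteq> 0 \<Longrightarrow> vge v (v x - int j * C) (hasse_rf j x)"
    using hasse_rf_bound[OF assms(1)] by blast
  interpret continuous_extension v w \<iota> hasse_rf C
    using higher_derivation_hasse_rf assms(3) C
    unfolding higher_derivation_def by unfold_locales blast+
  have vanish: "extension k c = 0"
    if K: "coefficient_field w K" "\<iota> ` range rf_const \<subseteq> K" and "c \<in> K" "0 < k" for K c k
  proof -
    obtain f where f: "separable_poly f" "poly (map_poly (\<iota> \<circ> rf_const) f) c = 0"
      using coefficient_field_separable_root[OF assms K \<open>c \<in> K\<close>] by blast
    show ?thesis
      by (rule extension_separable_root[OF field_hom_comp[OF \<iota> field_hom_rf_const] _ f \<open>0 < k\<close>])
        (simp add: extension_iota hasse_rf_rf_const field_hom_0[OF \<iota>])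
  qed
  show ?thesis
  proof (intro exI conjI allI impI)
    show "vcontinuous w (extension j)" for j by (rule extension_continuous)
    show "extension j (\<iota> x) = \<iota> (hasse_rf j x)" for j x by (rule extension_iota)
    show "higher_derivation K extension" if "coefficient_field w K \<and> \<iota> ` range rf_const \<subseteq> K" for K
      using that by (intro higher_derivation_extension vanish) auto
  qed
qed

end
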